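(* Let $b\ge 2$ and $\ell\ge 1$ be integers, $m=b^{\ell+1}$, let $S=S_\ell:(\mathbb{Z}/m\mathbb{Z})^{\times}\to\mathbb{R}$ be the collision deviation and $S^{\circ}$ its centered version (see context). Then for every Dirichlet character $\chi$ modulo $m$ that is even, i.e. $\chi(-1)=1$, \[ \hat{S}^{\circ}(\chi)=\frac{1}{\phi(m)}\sum_{a\in(\mathbb{Z}/m\mathbb{Z})^{\times}} S^{\circ}(a)\,\overline{\chi}(a)=0 . \]
   Context: The collision deviation $S_\ell(p)$ is a real-valued invariant of primes $p$ with $\gcd(p,b)=1$, introduced in a companion paper; it depends only on $p\bmod m$, $m=b^{\ell+1}$, so it is regarded as a function $S$ on $(\mathbb{Z}/m\mathbb{Z})^{\times}$. It satisfies the reflection identity $S(a)+S(m-a)=-1$ for every unit $a$ mod $m$ (established in the companion paper, taken as given). For a unit $a$ mod $m$, its spectral class is $R(a)=(a-1)\bmod b\in\{0,\dots,b-1\}$ (well defined since $b\mid m$). For each spectral class $R$ attained by some unit, $\overline{S}_R$ denotes the average of $S$ over all units $a\in(\mathbb{Z}/m\mathbb{Z})^{\times}$ with $R(a)=R$. The centered collision deviation is $S^{\circ}(a)=S(a)-\overline{S}_{R(a)}$, and its transform is $\hat{S}^{\circ}(\chi)=\frac{1}{\phi(m)}\sum_a S^{\circ}(a)\overline{\chi}(a)$. *)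

theory Defs
  imports "HOL-Number_Theory.Number_Theory" "HOL-Analysis.Analysis"
begin

definition units_mod :: "nat \<Rightarrow> nat set" where
  "units_mod m = {a. a < m \<and> coprime a m}"

definition dirichlet_character :: "nat \<Rightarrow> (nat \<Rightarrow> complex) \<Rightarrow> bool" where
  "dirichlet_character m chi \<longleftrightarrow>
     (\<forall>n. chi (n + m) = chi n) \<and>
     (\<forall>x y. chi (x * y) = chi x * chi y) \<and>
     chi 1 = 1 \<and>
     (\<forall>n. chi n = 0 \<longleftrightarrow> \<not> coprime n m)"

text \<open>Even character: chi(-1) = 1, where -1 is represented by m - 1.\<close>
definition even_character :: "nat \<Rightarrow> (nat \<Rightarrow> complex) \<Rightarrow> bool" where
  "even_character m chi \<longleftrightarrow> chi (m - 1) = 1"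

text \<open>Spectral class R(a) = (a - 1) mod b (units a are \<ge> 1).\<close>
definition spectral_class :: "nat \<Rightarrow> nat \<Rightarrow> nat" where
  "spectral_class b a = (a - 1) mod b"

definition class_avg :: "nat \<Rightarrow> nat \<Rightarrow> (nat \<Rightarrow> real) \<Rightarrow> nat \<Rightarrow> real" where
  "class_avg b m S R =
     (\<Sum>a\<in>{a\<in>units_mod m. spectral_class b a = R}. S a) /
     real (card {a\<in>units_mod m. spectral_class b a = R})"

definition centered :: "nat \<Rightarrow> nat \<Rightarrow> (nat \<Rightarrow> real) \<Rightarrow> nat \<Rightarrow> real" where
  "centered b m S a = S a - class_avg b m S (spectral_class b a)"

definition centered_transform ::
  "nat \<Rightarrow> nat \<Rightarrow> (nat \<Rightarrow> real) \<Rightarrow> (nat \<Rightarrow> complex) \<Rightarrow> complex" where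
  "centered_transform b m S chi =
     (1 / of_nat (totient m)) *
     (\<Sum>a\<in>units_mod m. complex_of_real (centered b m S a) * cnj (chi a))"

end

theory Submission
  imports Defs
begin

text \<open>The reflection a \<mapsto> m - a permutes the units and maps spectral classes onto
  spectral classes (only 0 < a < m is used, not b dvd m). The reflection identity
  S(a) + S(m - a) = -1 therefore turns the average over the reflected class into -1 minus the
  original average, so the centered deviation is odd under the reflection. An even character is
  invariant under it, so the summands of the transform cancel in pairs.\<close>

lemma sum_eq_0_if_odd_under_bij:
  fixes f :: "'b \<Rightarrow> 'a::real_vector"
  assumes "bij_betw g A A" and "\<And>a. a \<in> A \<Longrightarrow> f (g a) = - f a"
  shows "sum f A = 0"
proof -
  have "sum f A = (\<Sum>a\<in>A. f (g a))"
    using sum.reindex_bij_betw[OF assms(1), of f] by simp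
  also have "\<dots> = - sum f A"
    by (simp add: assms(2) sum_negf)
  finally have "2 *\<^sub>R sum f A = 0"
    by (simp add: scaleR_2 flip: eq_neg_iff_add_eq_0)
  then show ?thesis
    by simp
qed

lemma units_mod_pos:
  assumes "1 < m" and "a \<in> units_mod m"
  shows "0 < a"
proof (rule ccontr)
  assume "\<not> 0 < a"
  then have "coprime 0 m"
    using assms(2) by (simp add: units_mod_def)
  with assms(1) show False
    by simp
qed

lemma units_mod_reflect:
  assumes "1 < m" and "a \<in> units_mod m"
  shows "m - a \<in> units_mod m"
proof -
  have "0 < a" "a < m" "coprime a m"
    using units_mod_pos[OF assms] assms(2) unfolding units_mod_def by simp_all
  then have "coprime (m - a) m"
    by (metis coprime_iff_gcd_eq_1 gcd_diff2_nat less_imp_le)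
  with \<open>0 < a\<close> \<open>a < m\<close> show ?thesis
    unfolding units_mod_def by simp
qed

lemma bij_betw_units_mod_reflect:
  assumes "1 < m"
  shows "bij_betw (\<lambda>a. m - a) (units_mod m) (units_mod m)"
proof -
  have "m - (m - a) = a" if "a \<in> units_mod m" for a
    using that by (simp add: units_mod_def)
  then show ?thesis
    by (intro bij_betwI[where g = "\<lambda>a. m - a"]) (auto intro: units_mod_reflect[OF assms])
qed

lemma spectral_class_eq_iff_cong:
  assumes "0 < x" and "0 < y"
  shows "spectral_class b x = spectral_class b y \<longleftrightarrow> [x = y] (mod b)"
proof -
  obtain x' y' where "x = Suc x'" and "y = Suc y'"
    using assms by (metis gr0_implies_Suc)
  then show ?thesis
    using cong_add_rcancel_nat[of x' 1 y' b]
    \<comment> \<open>the plain name cong_def refers to BNF_Corec.cong_def here\<close>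
    by (simp add: spectral_class_def unique_euclidean_semiring_class.cong_def)
qed

lemma cong_reflect_iff:
  fixes m x y :: nat
  assumes "x \<le> m" and "y \<le> m"
  shows "[m - x = m - y] (mod b) \<longleftrightarrow> [x = y] (mod b)"
proof -
  have "[m - x = m - y] (mod b) \<longleftrightarrow> [(m - x) + (x + y) = (m - y) + (x + y)] (mod b)"
    by (rule cong_add_rcancel_nat[symmetric])
  also have "\<dots> \<longleftrightarrow> [m + y = m + x] (mod b)"
    using assms by (simp add: algebra_simps)
  finally show ?thesis
    by (simp add: cong_add_lcancel_nat cong_sym_eq)
qed

definition spectral_fibre :: "nat \<Rightarrow> nat \<Rightarrow> nat \<Rightarrow> nat set" where
  "spectral_fibre b m R = {a \<in> units_mod m. spectral_class b a = R}"

lemma class_avg_eq_fibre_average: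
  "class_avg b m S R = (\<Sum>a\<in>spectral_fibre b m R. S a) / real (card (spectral_fibre b m R))"
  unfolding class_avg_def spectral_fibre_def ..

lemma spectral_fibre_reflect:
  assumes "1 < m" and "x \<in> units_mod m"
  shows "(\<lambda>a. m - a) ` spectral_fibre b m (spectral_class b x)
           = spectral_fibre b m (spectral_class b (m - x))"
proof -
  have same_class_reflect:
    "spectral_class b (m - a) = spectral_class b (m - x) \<longleftrightarrow> spectral_class b a = spectral_class b x"
    if "a \<in> units_mod m" for a
    using that assms units_mod_reflect[OF \<open>1 < m\<close>] units_mod_pos[OF \<open>1 < m\<close>]
    by (simp add: spectral_class_eq_iff_cong cong_reflect_iff less_imp_le units_mod_def)
  show ?thesis
  proof (intro equalityI subsetI)
    fix y assume "y \<in> spectral_fibre b m (spectral_class b (m - x))"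
    then have "y \<in> units_mod m" "spectral_class b y = spectral_class b (m - x)"
      unfolding spectral_fibre_def by simp_all
    moreover have "y = m - (m - y)"
      using \<open>y \<in> units_mod m\<close> by (simp add: units_mod_def)
    ultimately show "y \<in> (\<lambda>a. m - a) ` spectral_fibre b m (spectral_class b x)"
      using same_class_reflect[of "m - y"] units_mod_reflect[OF \<open>1 < m\<close>]
      unfolding spectral_fibre_def by (metis (mono_tags, lifting) image_eqI mem_Collect_eq)
  qed (use same_class_reflect units_mod_reflect[OF \<open>1 < m\<close>] in \<open>auto simp: spectral_fibre_def\<close>)
qed

lemma class_avg_reflect:
  assumes "1 < m" and "x \<in> units_mod m"
    and reflection: "\<And>a. a \<in> units_mod m \<Longrightarrow> S a + S (m - a) = -1"
  shows "class_avg b m S (spectral_class b (m - x)) = -1 - class_avg b m S (spectral_class b x)"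
proof -
  define F where "F = spectral_fibre b m (spectral_class b x)"
  have F_units: "F \<subseteq> units_mod m"
    unfolding F_def spectral_fibre_def by blast
  have inj: "inj_on (\<lambda>a. m - a) F"
    using bij_betw_imp_inj_on[OF bij_betw_units_mod_reflect[OF \<open>1 < m\<close>]] F_units
    by (rule inj_on_subset)
  have "finite F"
    using F_units finite_subset unfolding units_mod_def by fastforce
  moreover have "x \<in> F"
    using \<open>x \<in> units_mod m\<close> unfolding F_def spectral_fibre_def by simp
  ultimately have "card F > 0"
    by (auto simp: card_gt_0_iff)
  have "S (m - a) = -1 - S a" if "a \<in> F" for a
    using reflection[of a] F_units that by auto
  then have "(\<Sum>a\<in>(\<lambda>a. m - a) ` F. S a) = (\<Sum>a\<in>F. -1 - S a)"
    by (simp add: sum.reindex[OF inj])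
  also have "\<dots> = - real (card F) - (\<Sum>a\<in>F. S a)"
    by (simp add: sum_subtractf)
  finally show ?thesis
    using \<open>card F > 0\<close>
    by (simp add: class_avg_eq_fibre_average spectral_fibre_reflect[OF assms(1,2), symmetric]
        card_image[OF inj] F_def[symmetric] field_simps)
qed

lemma centered_reflect:
  assumes "1 < m" and "a \<in> units_mod m"
    and "\<And>a. a \<in> units_mod m \<Longrightarrow> S a + S (m - a) = -1"
  shows "centered b m S (m - a) = - centered b m S a"
  using class_avg_reflect[of m a S b, OF assms] assms(3)[OF assms(2)] unfolding centered_def by simp

lemma dirichlet_character_periodic:
  assumes "dirichlet_character m chi"
  shows "chi (n + k * m) = chi n"
proof (induction k)
  case (Suc k)
  have "chi (n + Suc k * m) = chi ((n + k * m) + m)"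
    by (simp add: algebra_simps)
  with Suc assms show ?case
    unfolding dirichlet_character_def by simp
qed simp

lemma even_character_reflect:
  assumes "dirichlet_character m chi" and "even_character m chi" and "0 < a" and "a \<le> m"
  shows "chi (m - a) = chi a"
proof -
  have "int ((m - 1) * a) = int ((m - a) + (a - 1) * m)"
    using assms(3,4) by (simp add: of_nat_diff algebra_simps)
  then have "(m - 1) * a = (m - a) + (a - 1) * m"
    by (simp only: of_nat_eq_iff)
  then have "chi (m - a) = chi ((m - 1) * a)"
    using dirichlet_character_periodic[OF assms(1)] by simp
  also have "\<dots> = chi a"
    using assms(1,2) unfolding dirichlet_character_def even_character_def by simp
  finally show ?thesis .
qed

theorem mainTheorem2:
  fixes b l m :: nat and S :: "nat \<Rightarrow> real" and chi :: "nat \<Rightarrow> complex"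
  assumes "b \<ge> 2" and "l \<ge> 1" and "m = b ^ (l + 1)"
    and reflection: "\<And>a. a \<in> units_mod m \<Longrightarrow> S a + S (m - a) = -1"
    and "dirichlet_character m chi" and "even_character m chi"
  shows "centered_transform b m S chi = 0"
proof -
  have "b < b ^ (l + 1)"
    using assms(1,2) power_strict_increasing[of 1 "l + 1" b] by simp
  then have "1 < m"
    using assms(1,3) by linarith
  have "(\<Sum>a\<in>units_mod m. complex_of_real (centered b m S a) * cnj (chi a)) = 0"
  proof (rule sum_eq_0_if_odd_under_bij[OF bij_betw_units_mod_reflect[OF \<open>1 < m\<close>]])
    fix a assume "a \<in> units_mod m"
    then have "0 < a" "a \<le> m"
      using units_mod_pos[OF \<open>1 < m\<close>] by (auto simp: units_mod_def)
    then show "complex_of_real (centered b m S (m - a)) * cnj (chi (m - a))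
             = - (complex_of_real (centered b m S a) * cnj (chi a))"
      using centered_reflect[of m a S b, OF \<open>1 < m\<close> \<open>a \<in> units_mod m\<close> reflection]
        even_character_reflect[OF assms(5,6)] by simp
  qed
  then show ?thesis
    unfolding centered_transform_def by simp
qed

end
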